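(* Let $d\ge 1$ and $k\ge 2$ be integers. The Hamming graph $H(d,k)$ admits a closed neighborhood balanced $k$-coloring if and only if $d\equiv 1 \pmod{k}$.
   Context: The Hamming graph $H(d,k)$ has vertex set $S^d$ where $S=\{1,2,\dots,k\}$, two $d$-tuples being adjacent iff they differ in exactly one coordinate. For a vertex $v$ of a graph $G$, $N[v]=\{v\}\cup\{u : uv\in E(G)\}$. A closed neighborhood balanced $k$-coloring of $G$ is a map $c: V(G)\to\{1,\dots,k\}$ such that for every vertex $v$ the numbers $|\{u\in N[v] : c(u)=i\}|$, $i=1,\dots,k$, are all equal. *)

theory Defs
  imports Main
begin

text \<open>Hamming graph H(d,k): vertices are d-tuples over {1..k}, represented as
  functions nat => nat with values in {1..k} on coordinates 0..d-1 and value 0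
  (a dummy) outside.\<close>

definition hamming_vertices :: "nat \<Rightarrow> nat \<Rightarrow> (nat \<Rightarrow> nat) set" where
  "hamming_vertices d k = {v. (\<forall>i<d. v i \<in> {1..k}) \<and> (\<forall>i\<ge>d. v i = 0)}"

definition hamming_adj :: "nat \<Rightarrow> (nat \<Rightarrow> nat) \<Rightarrow> (nat \<Rightarrow> nat) \<Rightarrow> bool" where
  "hamming_adj d u v \<longleftrightarrow> card {i. i < d \<and> u i \<noteq> v i} = 1"

definition hamming_closed_nbhd :: "nat \<Rightarrow> nat \<Rightarrow> (nat \<Rightarrow> nat) \<Rightarrow> (nat \<Rightarrow> nat) set" where
  "hamming_closed_nbhd d k v = {v} \<union> {u \<in> hamming_vertices d k. hamming_adj d u v}"

definition cnb_coloring :: "'a set \<Rightarrow> ('a \<Rightarrow> 'a set) \<Rightarrow> nat \<Rightarrow> ('a \<Rightarrow> nat) \<Rightarrow> bool" where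
  "cnb_coloring V N k c \<longleftrightarrow>
     (\<forall>v\<in>V. c v \<in> {1..k}) \<and>
     (\<forall>v\<in>V. \<forall>i\<in>{1..k}. \<forall>j\<in>{1..k}.
        card {u \<in> N v. c u = i} = card {u \<in> N v. c u = j})"

end

theory Submission
  imports Defs
begin

text \<open>Every closed neighbourhood of H(d,k) has 1 + d(k - 1) vertices, and a balanced
  k-colouring splits it into k classes of equal size, so k divides 1 + d(k - 1), i.e.
  d \<equiv> 1 (mod k). Conversely, if d = mk + 1, colour a vertex by the sum of its first
  e = d - m coordinates modulo k. Changing one of these e coordinates of v runs once through
  every colour other than that of v; changing one of the remaining m coordinates keeps the
  colour. Hence N[v] contains 1 + m(k - 1) vertices of the colour of v and e of every other
  colour, and these numbers agree.\<close>

lemma hamming_neighbours_eq: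
  assumes v: "v \<in> hamming_vertices d k"
  shows "{u \<in> hamming_vertices d k. hamming_adj d u v}
       = (\<Union>i<d. (\<lambda>a. v(i := a)) ` ({1..k} - {v i}))"
proof (intro equalityI subsetI)
  fix u assume u: "u \<in> {u \<in> hamming_vertices d k. hamming_adj d u v}"
  then obtain i where i: "{j. j < d \<and> u j \<noteq> v j} = {i}"
    by (auto simp: hamming_adj_def card_1_singleton_iff)
  then have "i < d" "u i \<noteq> v i" by auto
  have "u = v(i := u i)"
  proof
    fix j show "u j = (v(i := u i)) j"
      using i u v by (cases "j < d"; cases "j = i") (auto simp: hamming_vertices_def)
  qed
  moreover have "u i \<in> {1..k}" using u \<open>i < d\<close> by (auto simp: hamming_vertices_def)
  ultimately show "u \<in> (\<Union>i<d. (\<lambda>a. v(i := a)) ` ({1..k} - {v i}))"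
    using \<open>i < d\<close> \<open>u i \<noteq> v i\<close> by blast
next
  fix u assume "u \<in> (\<Union>i<d. (\<lambda>a. v(i := a)) ` ({1..k} - {v i}))"
  then obtain i a where ia: "i < d" "a \<in> {1..k}" "a \<noteq> v i" "u = v(i := a)" by blast
  then have "{j. j < d \<and> u j \<noteq> v j} = {i}" by auto
  then show "u \<in> {u \<in> hamming_vertices d k. hamming_adj d u v}"
    using v ia by (auto simp: hamming_adj_def hamming_vertices_def)
qed

lemma card_hamming_closed_nbhd_filter:
  assumes v: "v \<in> hamming_vertices d k"
  shows "card {u \<in> hamming_closed_nbhd d k v. P u}
       = (if P v then 1 else 0) + (\<Sum>i<d. card {a \<in> {1..k} - {v i}. P (v(i := a))})"
proof -
  let ?Nb = "{u \<in> hamming_vertices d k. hamming_adj d u v}"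
  let ?A = "\<lambda>i. {a \<in> {1..k} - {v i}. P (v(i := a))}"
  have nbrs: "{u \<in> ?Nb. P u}
      = (\<Union>i<d. (\<lambda>a. v(i := a)) ` ?A i)"
    unfolding hamming_neighbours_eq[OF v] by blast
  have disjoint: "(\<lambda>a. v(i := a)) ` ?A i \<inter> (\<lambda>a. v(j := a)) ` ?A j = {}" if "i \<noteq> j" for i j
  proof -
    have "v(i := a) \<noteq> v(j := b)" if "a \<noteq> v i" for a b
      using \<open>i \<noteq> j\<close> that by (metis fun_upd_other fun_upd_same)
    then show ?thesis by blast
  qed
  have inj: "inj_on (\<lambda>a. v(i := a)) (?A i)" for i
    by (rule inj_onI) (metis fun_upd_same)
  have "card {u \<in> ?Nb. P u} = (\<Sum>i<d. card ((\<lambda>a. v(i := a)) ` ?A i))"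
    unfolding nbrs using disjoint by (intro card_UN_disjoint) simp_all
  also have "\<dots> = (\<Sum>i<d. card (?A i))"
    using inj by (intro sum.cong refl card_image)
  finally have "card {u \<in> ?Nb. P u} = (\<Sum>i<d. card (?A i))" .
  moreover have "v \<notin> ?Nb"
    by (simp add: hamming_adj_def)
  moreover have "finite {u \<in> ?Nb. P u}"
    unfolding nbrs by simp
  moreover have "{u \<in> hamming_closed_nbhd d k v. P u}
      = (if P v then {v} else {}) \<union> {u \<in> ?Nb. P u}"
    by (auto simp: hamming_closed_nbhd_def)
  ultimately show ?thesis by (auto simp: card_insert_if)
qed

lemma card_hamming_closed_nbhd:
  assumes "v \<in> hamming_vertices d k"
  shows "card (hamming_closed_nbhd d k v) = 1 + d * (k - 1)"
proof -
  have "card {a \<in> {1..k} - {v i}. True} = k - 1" if "i < d" for i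
  proof -
    have "v i \<in> {1..k}" using assms that by (simp add: hamming_vertices_def)
    then have "card ({1..k} - {v i}) = k - 1" by (simp only: card_Diff_singleton card_atLeastAtMost)
    moreover have "{a \<in> {1..k} - {v i}. True} = {1..k} - {v i}" by blast
    ultimately show ?thesis by (simp only:)
  qed
  then show ?thesis
    using card_hamming_closed_nbhd_filter[OF assms, of "\<lambda>_. True"] by simp
qed

lemma finite_hamming_closed_nbhd:
  assumes "v \<in> hamming_vertices d k"
  shows "finite (hamming_closed_nbhd d k v)"
  unfolding hamming_closed_nbhd_def hamming_neighbours_eq[OF assms] by simp

lemma hamming_closed_nbhd_subset:
  assumes "v \<in> hamming_vertices d k"
  shows "hamming_closed_nbhd d k v \<subseteq> hamming_vertices d k"
  using assms by (auto simp: hamming_closed_nbhd_def)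

lemma cnb_coloring_dvd_card:
  assumes c: "cnb_coloring V N k c" and v: "v \<in> V"
    and sub: "N v \<subseteq> V" and fin: "finite (N v)"
  shows "k dvd card (N v)"
proof -
  let ?class = "\<lambda>j. {u \<in> N v. c u = j}"
  have range: "c u \<in> {1..k}" if "u \<in> N v" for u
    using c sub that unfolding cnb_coloring_def by blast
  have partition: "(\<Union>j\<in>{1..k}. ?class j) = N v"
    using range by blast
  have "card (\<Union>j\<in>{1..k}. ?class j) = (\<Sum>j\<in>{1..k}. card (?class j))"
    using fin by (intro card_UN_disjoint) auto
  then have "card (N v) = (\<Sum>j\<in>{1..k}. card (?class j))"
    by (simp only: partition)
  also have "\<dots> = k * card (?class 1)"
  proof (cases "k = 0")
    case False
    then have "1 \<in> {1..k}" by simp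
    then have "card (?class j) = card (?class 1)" if "j \<in> {1..k}" for j
      using c v that unfolding cnb_coloring_def by blast
    then have "(\<Sum>j\<in>{1..k}. card (?class j)) = (\<Sum>j\<in>{1..k}. card (?class 1))"
      by (rule sum.cong[OF refl])
    then show ?thesis by simp
  qed simp
  finally show ?thesis by simp
qed

lemma mod_eq_one_if_dvd_one_plus_mult_pred:
  fixes d k :: nat
  assumes "k \<ge> 1" and "k dvd 1 + d * (k - 1)"
  shows "d mod k = 1 mod k"
proof -
  obtain q where q: "1 + d * (k - 1) = k * q" using assms(2) by blast
  obtain k' where "k = Suc k'" using assms(1) by (cases k) auto
  then have sum: "k * q + d = 1 + d * k" using q by (simp add: algebra_simps)
  have "d mod k = (k * q + d) mod k" by (simp only: mod_mult_self4)
  also have "\<dots> = (1 + d * k) mod k" by (simp only: sum)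
  also have "\<dots> = 1 mod k" by (rule mod_mult_self1)
  finally show ?thesis .
qed

definition sum_mod_coloring :: "nat \<Rightarrow> nat \<Rightarrow> (nat \<Rightarrow> nat) \<Rightarrow> nat" where
  "sum_mod_coloring k e u = (\<Sum>l<e. u l) mod k + 1"

lemma sum_mod_coloring_upd_low:
  assumes "l < e"
  shows "sum_mod_coloring k e (v(l := a)) = ((\<Sum>l'\<in>{..<e} - {l}. v l') + a) mod k + 1"
proof -
  have "(\<Sum>l'<e. (v(l := a)) l') = a + (\<Sum>l'\<in>{..<e} - {l}. (v(l := a)) l')"
    using assms by (simp add: sum.remove)
  also have "\<dots> = a + (\<Sum>l'\<in>{..<e} - {l}. v l')" by (auto intro: sum.cong)
  finally show ?thesis by (simp add: sum_mod_coloring_def add.commute)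
qed

lemma sum_mod_coloring_upd_high:
  "e \<le> l \<Longrightarrow> sum_mod_coloring k e (v(l := a)) = sum_mod_coloring k e v"
  unfolding sum_mod_coloring_def by (auto intro!: arg_cong[where f = "\<lambda>x. x mod k + 1"] sum.cong)

lemma card_add_mod_eq:
  fixes k :: nat
  assumes "k \<ge> 1" "r < k"
  shows "card {a \<in> {1..k}. (T + a) mod k = r} = 1"
proof -
  let ?f = "\<lambda>a. (T + a) mod k"
  have inj: "inj_on ?f {1..k}"
  proof (rule inj_onI)
    fix a b assume ab: "a \<in> {1..k}" "b \<in> {1..k}" "?f a = ?f b"
    then have "a mod k = b mod k" by (simp add: nat_mod_eq_iff)
    then show "a = b" using ab by (cases "a = k"; cases "b = k") auto
  qed
  have "?f ` {1..k} \<subseteq> {..<k}" using assms(1) by auto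
  moreover have "card (?f ` {1..k}) = card {..<k}" using card_image[OF inj] by simp
  ultimately have "?f ` {1..k} = {..<k}" by (simp add: card_subset_eq)
  then have "r \<in> ?f ` {1..k}" using assms(2) by simp
  then obtain a0 where a0: "a0 \<in> {1..k}" "r = ?f a0" by (rule imageE)
  have "{a \<in> {1..k}. ?f a = r} = {a0}"
  proof (intro equalityI subsetI)
    fix a assume "a \<in> {a \<in> {1..k}. ?f a = r}"
    then show "a \<in> {a0}" using inj_onD[OF inj _ _ a0(1)] a0(2) by simp
  qed (use a0 in simp)
  then show ?thesis by simp
qed

lemma card_sum_mod_coloring_upd_low:
  assumes "k \<ge> 1" "l < e" "v l \<in> {1..k}" "j \<in> {1..k}"
  shows "card {a \<in> {1..k} - {v l}. sum_mod_coloring k e (v(l := a)) = j}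
       = (if sum_mod_coloring k e v = j then 0 else 1)"
proof -
  define T where "T = (\<Sum>l'\<in>{..<e} - {l}. v l')"
  have upd: "sum_mod_coloring k e (v(l := a)) = (T + a) mod k + 1" for a
    unfolding T_def using sum_mod_coloring_upd_low[OF \<open>l < e\<close>] .
  have "{a \<in> {1..k} - {v l}. sum_mod_coloring k e (v(l := a)) = j}
      = {a \<in> {1..k}. (T + a) mod k = j - 1} - {v l}"
    using assms(4) by (auto simp: upd)
  moreover have "card {a \<in> {1..k}. (T + a) mod k = j - 1} = 1"
    using card_add_mod_eq[OF assms(1)] assms(4) by fastforce
  moreover have "v l \<in> {a \<in> {1..k}. (T + a) mod k = j - 1} \<longleftrightarrow> sum_mod_coloring k e v = j"
    using upd[of "v l"] assms(3,4) by auto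
  ultimately show ?thesis by (simp add: card_Diff_singleton_if)
qed

lemma card_sum_mod_coloring_upd_high:
  assumes "e \<le> l" "v l \<in> {1..k}"
  shows "card {a \<in> {1..k} - {v l}. sum_mod_coloring k e (v(l := a)) = j}
       = (if sum_mod_coloring k e v = j then k - 1 else 0)"
proof -
  have "{a \<in> {1..k} - {v l}. sum_mod_coloring k e (v(l := a)) = j}
      = (if sum_mod_coloring k e v = j then {1..k} - {v l} else {})"
    using assms(1) by (auto simp: sum_mod_coloring_upd_high)
  then show ?thesis using assms(2) by (simp add: card_Diff_singleton)
qed

lemma card_sum_mod_coloring_nbhd:
  assumes v: "v \<in> hamming_vertices d k" and "k \<ge> 1" "e \<le> d" "j \<in> {1..k}"
  shows "card {u \<in> hamming_closed_nbhd d k v. sum_mod_coloring k e u = j}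
       = (if sum_mod_coloring k e v = j then 1 + (d - e) * (k - 1) else e)"
proof -
  let ?c = "sum_mod_coloring k e"
  let ?n = "\<lambda>l. card {a \<in> {1..k} - {v l}. ?c (v(l := a)) = j}"
  have coord: "v l \<in> {1..k}" if "l < d" for l using v that by (simp add: hamming_vertices_def)
  have "card {u \<in> hamming_closed_nbhd d k v. ?c u = j} = (if ?c v = j then 1 else 0) + (\<Sum>l<d. ?n l)"
    by (rule card_hamming_closed_nbhd_filter[OF v])
  also have "(\<Sum>l<d. ?n l) = (\<Sum>l<e. ?n l) + (\<Sum>l\<in>{e..<d}. ?n l)"
    using sum.atLeastLessThan_concat[of 0 e d ?n] \<open>e \<le> d\<close> by (simp add: lessThan_atLeast0)
  also have "(\<Sum>l<e. ?n l) = (\<Sum>l<e. if ?c v = j then 0 else 1)"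
    using assms coord by (intro sum.cong refl card_sum_mod_coloring_upd_low) auto
  also have "(\<Sum>l\<in>{e..<d}. ?n l) = (\<Sum>l\<in>{e..<d}. if ?c v = j then k - 1 else 0)"
    using coord by (intro sum.cong refl card_sum_mod_coloring_upd_high) auto
  finally show ?thesis by simp
qed

lemma sum_mod_coloring_balanced:
  assumes "k \<ge> 1" "e \<le> d" "1 + (d - e) * (k - 1) = e"
  shows "cnb_coloring (hamming_vertices d k) (hamming_closed_nbhd d k) k (sum_mod_coloring k e)"
  unfolding cnb_coloring_def
proof (intro conjI ballI)
  show "sum_mod_coloring k e v \<in> {1..k}" for v
    using assms(1) by (simp add: sum_mod_coloring_def Suc_le_eq)
  fix v i j assume "v \<in> hamming_vertices d k" "i \<in> {1..k}" "j \<in> {1..k}"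
  then show "card {u \<in> hamming_closed_nbhd d k v. sum_mod_coloring k e u = i}
      = card {u \<in> hamming_closed_nbhd d k v. sum_mod_coloring k e u = j}"
    using card_sum_mod_coloring_nbhd assms by simp
qed

lemma hamming_cnb_coloring_imp_mod_eq_one:
  assumes "k \<ge> 1" and c: "cnb_coloring (hamming_vertices d k) (hamming_closed_nbhd d k) k c"
  shows "d mod k = 1 mod k"
proof -
  define v where "v = (\<lambda>i. if i < d then 1 else 0 :: nat)"
  have v: "v \<in> hamming_vertices d k" using assms(1) by (auto simp: v_def hamming_vertices_def)
  have "k dvd card (hamming_closed_nbhd d k v)"
    using c v hamming_closed_nbhd_subset[OF v] finite_hamming_closed_nbhd[OF v]
    by (rule cnb_coloring_dvd_card[where N = "hamming_closed_nbhd d k"])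
  then show ?thesis
    using assms(1) card_hamming_closed_nbhd[OF v]
    by (intro mod_eq_one_if_dvd_one_plus_mult_pred) simp_all
qed

lemma hamming_cnb_coloring_exists:
  assumes "k \<ge> 1" and d: "d = m * k + 1"
  shows "\<exists>c. cnb_coloring (hamming_vertices d k) (hamming_closed_nbhd d k) k c"
proof -
  have "m * k = m * (k - 1) + m" using assms(1) by (cases k) simp_all
  then have balance: "1 + (d - (d - m)) * (k - 1) = d - m" using d by simp
  have "cnb_coloring (hamming_vertices d k) (hamming_closed_nbhd d k) k (sum_mod_coloring k (d - m))"
    by (rule sum_mod_coloring_balanced[OF assms(1) _ balance]) simp
  then show ?thesis by blast
qed

theorem theorem2p5:
  fixes d k :: nat
  assumes "d \<ge> 1" and "k \<ge> 2"
  shows "(\<exists>c. cnb_coloring (hamming_vertices d k) (hamming_closed_nbhd d k) k c)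
         \<longleftrightarrow> d mod k = 1 mod k"
proof
  assume "\<exists>c. cnb_coloring (hamming_vertices d k) (hamming_closed_nbhd d k) k c"
  then obtain c where "cnb_coloring (hamming_vertices d k) (hamming_closed_nbhd d k) k c" ..
  with assms(2) show "d mod k = 1 mod k"
    by (intro hamming_cnb_coloring_imp_mod_eq_one) simp_all
next
  assume "d mod k = 1 mod k"
  then have "d = d div k * k + 1"
    using assms(2) div_mult_mod_eq[of d k] by simp
  with assms(2) show "\<exists>c. cnb_coloring (hamming_vertices d k) (hamming_closed_nbhd d k) k c"
    by (intro hamming_cnb_coloring_exists) simp_all
qed

end
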